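(* Consider the attacked observer with watermark and linear feedback $\kappa(\hat x)=-K\hat x$: $\dot{\hat x}=f(\hat x)+B(-K\hat x+G\xi)-L[C\hat x+D(-K\hat x+G\xi)]+Ly^a$, $\hat y=C\hat x+D(-K\hat x+G\xi)$, with input $\xi$ and output $\hat y$. Let $\beta>0$. If there exist a symmetric negative definite $Q\in\mathbb{R}^{n\times n}$ and $G\in\mathbb{R}^{m\times m}$ such that for all $x\in\mathbb{R}^n$ $$\begin{bmatrix}\mathcal{M}_{11} & Q(B-LD)G+(C-DK)^\top DG\\ \big(Q(B-LD)G+(C-DK)^\top DG\big)^\top & G^\top D^\top DG-\beta I_m\end{bmatrix}\succeq0,$$ where $\mathcal{M}_{11}=[A_x-BK-L(C-DK)]^\top Q+Q[A_x-BK-L(C-DK)]+(C-DK)^\top(C-DK)$ and $A_x=\frac{\partial f}{\partial x}(x)$, then $[\mathcal{L}^-_{\delta 2}]^\xi_{\hat y}(G)\ge\beta$.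
   Context: $f:\mathbb{R}^n\to\mathbb{R}^n$ continuously differentiable; $B\in\mathbb{R}^{n\times m}$, $C\in\mathbb{R}^{p\times n}$, $D\in\mathbb{R}^{p\times m}$, $K\in\mathbb{R}^{m\times n}$, $L\in\mathbb{R}^{n\times p}$; $y^a$ is an exogenous signal common to the compared trajectories. $\mathcal{L}^-_{\delta2}$ gain from $\xi$ to $\hat y$: with $\|h\|_{\mathcal{L}_2}:=\int\|h(t)\|^2dt$ (no square root) and truncation $(h)_\tau$, it is $\sup\gamma^-$ over $\gamma^->0$ for which some $\alpha^-\in\mathcal{K}$ gives $\|(\hat Y_1-\hat Y_2)_\tau\|_{\mathcal{L}_2}\ge\gamma^-\|(\xi_1-\xi_2)_\tau\|_{\mathcal{L}_2}-\alpha^-(\|\hat x_1-\hat x_2\|)$ for all $\tau\ge0$, initial states and inputs. *)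

theory Defs
  imports "HOL-Analysis.Analysis"
begin

definition classK :: "(real \<Rightarrow> real) \<Rightarrow> bool" where
  "classK \<alpha> \<longleftrightarrow> continuous_on {0..} \<alpha> \<and> \<alpha> 0 = 0 \<and> strict_mono_on {0..} \<alpha>"

text \<open>Squared L2 norm of the truncation (h)_tau (no square root): integral over [0,tau].\<close>
definition trunc_L2 :: "(real \<Rightarrow> real ^ 'k) \<Rightarrow> real \<Rightarrow> real" where
  "trunc_L2 h \<tau> = integral {0..\<tau>} (\<lambda>t. (norm (h t))\<^sup>2)"

definition neg_def :: "real ^ 'n ^ 'n \<Rightarrow> bool" where
  "neg_def Q \<longleftrightarrow> transpose Q = Q \<and> (\<forall>v. v \<noteq> 0 \<longrightarrow> v \<bullet> (Q *v v) < 0)"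

definition psd :: "real ^ 'k ^ 'k \<Rightarrow> bool" where
  "psd M \<longleftrightarrow> transpose M = M \<and> (\<forall>z. 0 \<le> z \<bullet> (M *v z))"

definition block4 :: "real ^ 'a ^ 'a \<Rightarrow> real ^ 'b ^ 'a \<Rightarrow> real ^ 'a ^ 'b \<Rightarrow> real ^ 'b ^ 'b
    \<Rightarrow> real ^ ('a + 'b) ^ ('a + 'b)" where
  "block4 M11 M12 M21 M22 = (\<chi> i j. case (i, j) of
      (Inl a, Inl b) \<Rightarrow> M11 $ a $ b
    | (Inl a, Inr b) \<Rightarrow> M12 $ a $ b
    | (Inr a, Inl b) \<Rightarrow> M21 $ a $ b
    | (Inr a, Inr b) \<Rightarrow> M22 $ a $ b)"

definition obs_out ::
  "real ^ 'n ^ 'p \<Rightarrow> real ^ 'm ^ 'p \<Rightarrow> real ^ 'n ^ 'm \<Rightarrow> real ^ 'm ^ 'm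
   \<Rightarrow> real ^ 'n \<Rightarrow> real ^ 'm \<Rightarrow> real ^ 'p" where
  "obs_out C D K G xh xi = C *v xh + D *v (- (K *v xh) + G *v xi)"

definition obs_traj ::
  "(real ^ 'n \<Rightarrow> real ^ 'n) \<Rightarrow> real ^ 'm ^ 'n \<Rightarrow> real ^ 'n ^ 'p \<Rightarrow> real ^ 'm ^ 'p
   \<Rightarrow> real ^ 'n ^ 'm \<Rightarrow> real ^ 'p ^ 'n \<Rightarrow> real ^ 'm ^ 'm
   \<Rightarrow> (real \<Rightarrow> real ^ 'p) \<Rightarrow> (real \<Rightarrow> real ^ 'm) \<Rightarrow> (real \<Rightarrow> real ^ 'n) \<Rightarrow> bool" where
  "obs_traj f B C D K L G ya xi xh \<longleftrightarrow>
     continuous_on {0..} xi \<and>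
     (\<forall>t\<ge>0. (xh has_vector_derivative
        (f (xh t) + B *v (- (K *v xh t) + G *v xi t)
         - L *v (C *v xh t + D *v (- (K *v xh t) + G *v xi t)) + L *v ya t))
        (at t within {0..}))"

definition lower_gain_set ::
  "(real ^ 'n \<Rightarrow> real ^ 'n) \<Rightarrow> real ^ 'm ^ 'n \<Rightarrow> real ^ 'n ^ 'p \<Rightarrow> real ^ 'm ^ 'p
   \<Rightarrow> real ^ 'n ^ 'm \<Rightarrow> real ^ 'p ^ 'n \<Rightarrow> real ^ 'm ^ 'm \<Rightarrow> real set" where
  "lower_gain_set f B C D K L G = {\<gamma>. \<gamma> > 0 \<and> (\<exists>\<alpha>. classK \<alpha> \<and>
     (\<forall>ya xi1 xi2 xh1 xh2 \<tau>.
        obs_traj f B C D K L G ya xi1 xh1 \<longrightarrow> obs_traj f B C D K L G ya xi2 xh2 \<longrightarrow> \<tau> \<ge> 0 \<longrightarrow>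
        trunc_L2 (\<lambda>t. obs_out C D K G (xh1 t) (xi1 t) - obs_out C D K G (xh2 t) (xi2 t)) \<tau>
          \<ge> \<gamma> * trunc_L2 (\<lambda>t. xi1 t - xi2 t) \<tau> - \<alpha> (norm (xh1 0 - xh2 0))))}"

definition lower_incr_L2_gain ::
  "(real ^ 'n \<Rightarrow> real ^ 'n) \<Rightarrow> real ^ 'm ^ 'n \<Rightarrow> real ^ 'n ^ 'p \<Rightarrow> real ^ 'm ^ 'p
   \<Rightarrow> real ^ 'n ^ 'm \<Rightarrow> real ^ 'p ^ 'n \<Rightarrow> real ^ 'm ^ 'm \<Rightarrow> ereal" where
  "lower_incr_L2_gain f B C D K L G = Sup (ereal ` lower_gain_set f B C D K L G)"

end

theory Submission imports Defs begin

text \<open>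
  For two trajectories of the observer driven by the same signal \<open>y\<^sup>a\<close>, the quadratic form
  \<open>W = e\<^sup>T Q e\<close> of the state difference \<open>e\<close> is an incremental storage function. By the mean value
  theorem applied to the scalar function \<open>s \<mapsto> e\<^sup>T Q f(x\<^sub>2 + s e)\<close>, the term \<open>e\<^sup>T Q (f x\<^sub>1 - f x\<^sub>2)\<close>
  equals \<open>e\<^sup>T Q A\<^sub>x e\<close> for some \<open>x\<close> on the segment, so the LMI at that \<open>x\<close>, evaluated at the vector
  \<open>(e, \<xi>\<^sub>1 - \<xi>\<^sub>2)\<close>, gives \<open>dW/dt + |\<Delta>y|\<^sup>2 - \<beta> |\<Delta>\<xi>|\<^sup>2 \<ge> 0\<close>. Integrating over \<open>[0, \<tau>]\<close>, and using
  \<open>W(\<tau>) \<le> 0\<close> and \<open>W(0) \<ge> -c |e(0)|\<^sup>2\<close>, yields the gain inequality with \<open>\<alpha>(r) = c r\<^sup>2\<close>.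
\<close>

lemma inner_transpose_matrix_vector:
  "(x::real^'a) \<bullet> (transpose M *v y) = (M *v x) \<bullet> y"
  by (metis dot_lmul_matrix inner_commute transpose_matrix_vector)

lemma psd_block4_quadratic_form:
  fixes M11 :: "real^'a^'a" and M12 :: "real^'b^'a" and M22 :: "real^'b^'b"
  assumes "psd (block4 M11 M12 (transpose M12) M22)"
  shows "0 \<le> e \<bullet> (M11 *v e) + 2 * (e \<bullet> (M12 *v d)) + d \<bullet> (M22 *v d)"
proof -
  define z :: "real^('a+'b)" where "z = (\<chi> i. case i of Inl a \<Rightarrow> e $ a | Inr b \<Rightarrow> d $ b)"
  have sum_Plus: "(\<Sum>i\<in>UNIV. g i) = (\<Sum>a\<in>UNIV. g (Inl a)) + (\<Sum>b\<in>UNIV. g (Inr b))"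
    for g :: "'a + 'b \<Rightarrow> real"
    by (subst UNIV_Plus_UNIV[symmetric], subst sum.Plus) (simp_all add: o_def)
  have "z \<bullet> (block4 M11 M12 (transpose M12) M22 *v z)
      = e \<bullet> (M11 *v e) + e \<bullet> (M12 *v d) + d \<bullet> (transpose M12 *v e) + d \<bullet> (M22 *v d)"
    unfolding inner_vec_def matrix_vector_mult_def block4_def z_def
    by (simp add: sum_Plus sum.distrib sum_distrib_left algebra_simps)
  moreover have "d \<bullet> (transpose M12 *v e) = e \<bullet> (M12 *v d)"
    by (metis inner_transpose_matrix_vector inner_commute)
  moreover have "0 \<le> z \<bullet> (block4 M11 M12 (transpose M12) M22 *v z)"
    using assms unfolding psd_def by blast
  ultimately show ?thesis
    by linarith
qed

lemma dissipation_inequality_of_psd: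
  fixes A Q :: "real^'n^'n" and P :: "real^'m^'n" and N :: "real^'n^'p" and M :: "real^'m^'p"
  assumes Q_sym: "transpose Q = Q"
    and LMI: "psd (block4 (transpose A ** Q + Q ** A + transpose N ** N) (Q ** P + transpose N ** M)
        (transpose (Q ** P + transpose N ** M)) (transpose M ** M - \<beta> *\<^sub>R mat 1))"
  shows "0 \<le> 2 * (e \<bullet> (Q *v (A *v e + P *v d))) + (norm (N *v e + M *v d))\<^sup>2 - \<beta> * (norm d)\<^sup>2"
proof -
  have "(A *v e) \<bullet> (Q *v e) = e \<bullet> (Q *v (A *v e))"
    by (metis inner_transpose_matrix_vector inner_commute Q_sym)
  then have "e \<bullet> ((transpose A ** Q + Q ** A + transpose N ** N) *v e)
      = 2 * (e \<bullet> (Q *v (A *v e))) + (norm (N *v e))\<^sup>2"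
    by (simp add: matrix_vector_mult_add_rdistrib inner_add_right power2_norm_eq_inner
        inner_transpose_matrix_vector inner_commute matrix_vector_mul_assoc[symmetric]
        del: transpose_matrix_vector)
  moreover have "e \<bullet> ((Q ** P + transpose N ** M) *v d) = e \<bullet> (Q *v (P *v d)) + (N *v e) \<bullet> (M *v d)"
    by (simp add: matrix_vector_mult_add_rdistrib inner_add_right inner_transpose_matrix_vector
        matrix_vector_mul_assoc[symmetric] del: transpose_matrix_vector)
  moreover have "d \<bullet> ((transpose M ** M - \<beta> *\<^sub>R mat 1) *v d) = (norm (M *v d))\<^sup>2 - \<beta> * (norm d)\<^sup>2"
    by (simp add: matrix_vector_mult_diff_rdistrib inner_diff_right power2_norm_eq_inner
        inner_transpose_matrix_vector matrix_vector_mul_assoc[symmetric]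
        scaleR_matrix_vector_assoc[symmetric]
        del: transpose_matrix_vector)
  moreover have "(norm (N *v e + M *v d))\<^sup>2
      = (norm (N *v e))\<^sup>2 + 2 * ((N *v e) \<bullet> (M *v d)) + (norm (M *v d))\<^sup>2"
    by (simp add: power2_norm_eq_inner inner_add_left inner_add_right inner_commute)
  ultimately show ?thesis
    using psd_block4_quadratic_form[OF LMI, of e d]
    by (simp add: matrix_vector_right_distrib inner_add_right)
qed

lemma inner_mean_value:
  fixes f :: "'a::real_normed_vector \<Rightarrow> 'b::real_inner"
  assumes f_deriv: "\<And>x. (f has_derivative f' x) (at x)"
  shows "\<exists>s\<in>{0<..<1}. w \<bullet> (f y - f x) = w \<bullet> f' (x + s *\<^sub>R (y - x)) (y - x)"
proof -
  let ?p = "\<lambda>s::real. x + s *\<^sub>R (y - x)"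
  have "((\<lambda>s. w \<bullet> f (?p s)) has_derivative (\<lambda>h. w \<bullet> f' (?p s) (h *\<^sub>R (y - x))))
      (at s within {0..1})" for s
  proof -
    have "(?p has_derivative (\<lambda>h. h *\<^sub>R (y - x))) (at s within {0..1})"
      by (auto intro!: derivative_eq_intros)
    from diff_chain_within[OF this has_derivative_at_withinI[OF f_deriv]]
    have "((\<lambda>s. f (?p s)) has_derivative (\<lambda>h. f' (?p s) (h *\<^sub>R (y - x)))) (at s within {0..1})"
      by (simp add: o_def)
    then show ?thesis
      by (rule has_derivative_inner_right)
  qed
  from mvt_simple[of 0 1, OF _ this] show ?thesis
    by (simp add: inner_diff_right)
qed

definition obs_field ::
  "(real ^ 'n \<Rightarrow> real ^ 'n) \<Rightarrow> real ^ 'm ^ 'n \<Rightarrow> real ^ 'n ^ 'p \<Rightarrow> real ^ 'm ^ 'p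
   \<Rightarrow> real ^ 'n ^ 'm \<Rightarrow> real ^ 'p ^ 'n \<Rightarrow> real ^ 'm ^ 'm
   \<Rightarrow> real ^ 'p \<Rightarrow> real ^ 'n \<Rightarrow> real ^ 'm \<Rightarrow> real ^ 'n" where
  "obs_field f B C D K L G y xh xi =
     f xh + B *v (- (K *v xh) + G *v xi) - L *v obs_out C D K G xh xi + L *v y"

lemma obs_traj_has_vector_derivative:
  assumes "obs_traj f B C D K L G ya xi xh" and "0 \<le> t"
  shows "(xh has_vector_derivative obs_field f B C D K L G (ya t) (xh t) (xi t)) (at t within {0..})"
  using assms unfolding obs_traj_def obs_field_def obs_out_def by blast

lemma obs_traj_continuous_on:
  assumes "obs_traj f B C D K L G ya xi xh"
  shows "continuous_on {0..} xh" and "continuous_on {0..} xi"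
proof -
  show "continuous_on {0..} xh"
    using obs_traj_has_vector_derivative[OF assms]
    by (auto simp: continuous_on_eq_continuous_within intro: has_vector_derivative_continuous)
  show "continuous_on {0..} xi"
    using assms unfolding obs_traj_def by blast
qed

lemma obs_out_diff:
  "obs_out C D K G x1 u1 - obs_out C D K G x2 u2 = (C - D ** K) *v (x1 - x2) + (D ** G) *v (u1 - u2)"
  by (simp add: obs_out_def algebra_simps matrix_vector_mul_assoc[symmetric])

lemma obs_field_diff:
  "obs_field f B C D K L G y x1 u1 - obs_field f B C D K L G y x2 u2
    = (f x1 - f x2) - (B ** K + L ** (C - D ** K)) *v (x1 - x2) + ((B - L ** D) ** G) *v (u1 - u2)"
  by (simp add: obs_field_def obs_out_def algebra_simps
      matrix_vector_mul_assoc[symmetric])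

definition observer_lmi ::
  "(real ^ 'n \<Rightarrow> real ^ 'n ^ 'n) \<Rightarrow> real ^ 'm ^ 'n \<Rightarrow> real ^ 'n ^ 'p \<Rightarrow> real ^ 'm ^ 'p
   \<Rightarrow> real ^ 'n ^ 'm \<Rightarrow> real ^ 'p ^ 'n \<Rightarrow> real ^ 'n ^ 'n \<Rightarrow> real ^ 'm ^ 'm \<Rightarrow> real \<Rightarrow> bool" where
  "observer_lmi Df B C D K L Q G \<beta> \<longleftrightarrow> (\<forall>x. psd (block4
        (transpose (Df x - B ** K - L ** (C - D ** K)) ** Q
           + Q ** (Df x - B ** K - L ** (C - D ** K))
           + transpose (C - D ** K) ** (C - D ** K))
        (Q ** (B - L ** D) ** G + transpose (C - D ** K) ** D ** G)
        (transpose (Q ** (B - L ** D) ** G + transpose (C - D ** K) ** D ** G))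
        (transpose G ** transpose D ** D ** G - \<beta> *\<^sub>R mat 1)))"

lemma obs_incremental_supply_nonneg:
  assumes f_deriv: "\<And>x. (f has_derivative (\<lambda>h. Df x *v h)) (at x)"
    and Q_sym: "transpose Q = Q"
    and LMI: "observer_lmi Df B C D K L Q G \<beta>"
  shows "0 \<le> 2 * ((x1 - x2) \<bullet> (Q *v (obs_field f B C D K L G y x1 u1 - obs_field f B C D K L G y x2 u2)))
      + (norm (obs_out C D K G x1 u1 - obs_out C D K G x2 u2))\<^sup>2 - \<beta> * (norm (u1 - u2))\<^sup>2"
proof -
  define e where "e = x1 - x2"
  define d where "d = u1 - u2"
  have "((\<lambda>x. Q *v f x) has_derivative (\<lambda>h. Q *v (Df x *v h))) (at x)" for x
    by (rule bounded_linear.has_derivative[OF matrix_vector_mul_bounded_linear f_deriv])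
  from inner_mean_value[OF this, of e x1 x2]
  obtain \<xi> where mean_value: "e \<bullet> (Q *v (f x1 - f x2)) = e \<bullet> (Q *v (Df \<xi> *v e))"
    unfolding e_def by (auto simp: matrix_vector_mult_diff_distrib)
  define A where "A = Df \<xi> - B ** K - L ** (C - D ** K)"
  have "psd (block4 (transpose A ** Q + Q ** A + transpose (C - D ** K) ** (C - D ** K))
      (Q ** ((B - L ** D) ** G) + transpose (C - D ** K) ** (D ** G))
      (transpose (Q ** ((B - L ** D) ** G) + transpose (C - D ** K) ** (D ** G)))
      (transpose (D ** G) ** (D ** G) - \<beta> *\<^sub>R mat 1))"
    using LMI unfolding observer_lmi_def A_def matrix_transpose_mul matrix_mul_assoc by blast
  from dissipation_inequality_of_psd[OF Q_sym this, of e d]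
  have "0 \<le> 2 * (e \<bullet> (Q *v (A *v e + ((B - L ** D) ** G) *v d)))
      + (norm ((C - D ** K) *v e + (D ** G) *v d))\<^sup>2 - \<beta> * (norm d)\<^sup>2" .
  moreover have "A *v e = Df \<xi> *v e - (B ** K + L ** (C - D ** K)) *v e"
    by (simp add: A_def matrix_vector_mult_diff_rdistrib matrix_vector_mult_add_rdistrib)
  then have "e \<bullet> (Q *v (A *v e + ((B - L ** D) ** G) *v d))
      = e \<bullet> (Q *v (obs_field f B C D K L G y x1 u1 - obs_field f B C D K L G y x2 u2))"
    using mean_value unfolding obs_field_diff e_def[symmetric] d_def[symmetric]
    by (simp add: inner_add_right inner_diff_right matrix_vector_right_distrib
        matrix_vector_mult_diff_distrib)
  ultimately show ?thesis
    unfolding obs_out_diff e_def[symmetric] d_def[symmetric] by linarith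
qed

lemma has_vector_derivative_quadratic_form:
  fixes Q :: "real ^ 'n ^ 'n"
  assumes Q_sym: "transpose Q = Q" and x_deriv: "(x has_vector_derivative x') (at t within S)"
  shows "((\<lambda>t. x t \<bullet> (Q *v x t)) has_vector_derivative 2 * (x t \<bullet> (Q *v x'))) (at t within S)"
proof -
  have Qx_deriv: "((\<lambda>t. Q *v x t) has_vector_derivative Q *v x') (at t within S)"
    by (rule bounded_linear.has_vector_derivative[OF matrix_vector_mul_bounded_linear x_deriv])
  have "x' \<bullet> (Q *v x t) = x t \<bullet> (Q *v x')"
    by (metis inner_transpose_matrix_vector inner_commute Q_sym)
  then show ?thesis
    using bounded_bilinear.has_vector_derivative[OF bounded_bilinear_inner x_deriv Qx_deriv]
    unfolding mult_2 by simp
qed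

lemma has_integral_trunc_L2:
  assumes "continuous_on {0..\<tau>} h"
  shows "((\<lambda>t. (norm (h t))\<^sup>2) has_integral trunc_L2 h \<tau>) {0..\<tau>}"
  unfolding trunc_L2_def
  by (rule integrable_integral, rule integrable_continuous_interval)
    (intro continuous_intros assms)

lemma continuous_on_obs_out:
  assumes "continuous_on S xh" and "continuous_on S xi"
  shows "continuous_on S (\<lambda>t. obs_out C D K G (xh t) (xi t))"
  unfolding obs_out_def
  using assms by (intro continuous_intros bounded_linear.continuous_on[OF matrix_vector_mul_bounded_linear])

lemma obs_incremental_dissipation:
  assumes f_deriv: "\<And>x. (f has_derivative (\<lambda>h. Df x *v h)) (at x)"
    and Q_sym: "transpose Q = Q"
    and LMI: "observer_lmi Df B C D K L Q G \<beta>"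
    and traj1: "obs_traj f B C D K L G ya xi1 xh1"
    and traj2: "obs_traj f B C D K L G ya xi2 xh2"
    and tau: "0 \<le> \<tau>"
  shows "(xh1 0 - xh2 0) \<bullet> (Q *v (xh1 0 - xh2 0)) - (xh1 \<tau> - xh2 \<tau>) \<bullet> (Q *v (xh1 \<tau> - xh2 \<tau>))
      \<le> trunc_L2 (\<lambda>t. obs_out C D K G (xh1 t) (xi1 t) - obs_out C D K G (xh2 t) (xi2 t)) \<tau>
        - \<beta> * trunc_L2 (\<lambda>t. xi1 t - xi2 t) \<tau>"
proof -
  define e where "e t = xh1 t - xh2 t" for t
  define F where "F t = obs_field f B C D K L G (ya t) (xh1 t) (xi1 t)
      - obs_field f B C D K L G (ya t) (xh2 t) (xi2 t)" for t
  define dy where "dy t = obs_out C D K G (xh1 t) (xi1 t) - obs_out C D K G (xh2 t) (xi2 t)" for t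
  define dxi where "dxi t = xi1 t - xi2 t" for t
  have "((\<lambda>t. e t \<bullet> (Q *v e t)) has_vector_derivative 2 * (e t \<bullet> (Q *v F t))) (at t within {0..\<tau>})"
    if "t \<in> {0..\<tau>}" for t
  proof -
    have "(e has_vector_derivative F t) (at t within {0..})"
      unfolding e_def F_def using that
      by (intro has_vector_derivative_diff obs_traj_has_vector_derivative traj1 traj2) auto
    then have "(e has_vector_derivative F t) (at t within {0..\<tau>})"
      by (rule has_vector_derivative_within_subset) auto
    then show ?thesis
      by (rule has_vector_derivative_quadratic_form[OF Q_sym])
  qed
  then have "((\<lambda>t. 2 * (e t \<bullet> (Q *v F t))) has_integral e \<tau> \<bullet> (Q *v e \<tau>) - e 0 \<bullet> (Q *v e 0)) {0..\<tau>}"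
    by (rule fundamental_theorem_of_calculus[OF tau])
  moreover have "((\<lambda>t. (norm (dy t))\<^sup>2) has_integral trunc_L2 dy \<tau>) {0..\<tau>}"
    and "((\<lambda>t. (norm (dxi t))\<^sup>2) has_integral trunc_L2 dxi \<tau>) {0..\<tau>}"
    using obs_traj_continuous_on[OF traj1] obs_traj_continuous_on[OF traj2]
    unfolding dy_def dxi_def
    by (auto intro!: has_integral_trunc_L2 continuous_intros continuous_on_obs_out
        elim: continuous_on_subset)
  ultimately have "((\<lambda>t. 2 * (e t \<bullet> (Q *v F t)) + ((norm (dy t))\<^sup>2 - \<beta> * (norm (dxi t))\<^sup>2))
      has_integral (e \<tau> \<bullet> (Q *v e \<tau>) - e 0 \<bullet> (Q *v e 0)) + (trunc_L2 dy \<tau> - \<beta> * trunc_L2 dxi \<tau>))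
      {0..\<tau>}"
    by (intro has_integral_add has_integral_diff has_integral_mult_right)
  moreover have "0 \<le> 2 * (e t \<bullet> (Q *v F t)) + ((norm (dy t))\<^sup>2 - \<beta> * (norm (dxi t))\<^sup>2)" for t
    using obs_incremental_supply_nonneg[OF f_deriv Q_sym LMI]
    unfolding e_def F_def dy_def dxi_def by (simp add: add_diff_eq)
  ultimately have "0 \<le> (e \<tau> \<bullet> (Q *v e \<tau>) - e 0 \<bullet> (Q *v e 0)) + (trunc_L2 dy \<tau> - \<beta> * trunc_L2 dxi \<tau>)"
    by (rule has_integral_nonneg)
  then show ?thesis
    unfolding e_def dy_def dxi_def by linarith
qed

lemma quadratic_form_lower_bound:
  fixes Q :: "real ^ 'n ^ 'n"
  obtains c where "c > 0" and "\<And>v. - (c * (norm v)\<^sup>2) \<le> v \<bullet> (Q *v v)"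
proof -
  obtain c where "c > 0" and c: "\<And>v. norm (Q *v v) \<le> norm v * c"
    using bounded_linear.pos_bounded[OF matrix_vector_mul_bounded_linear[of Q]] by blast
  moreover have "- (c * (norm v)\<^sup>2) \<le> v \<bullet> (Q *v v)" for v
  proof -
    have "\<bar>v \<bullet> (Q *v v)\<bar> \<le> norm v * norm (Q *v v)"
      by (rule Cauchy_Schwarz_ineq2)
    also have "\<dots> \<le> norm v * (norm v * c)"
      using c[of v] by (simp add: mult_left_mono)
    finally show ?thesis
      by (simp add: power2_eq_square algebra_simps)
  qed
  ultimately show ?thesis
    using that by blast
qed

lemma classK_scaled_square:
  assumes "c > 0"
  shows "classK (\<lambda>r. c * r\<^sup>2)"
  unfolding classK_def
  using assms by (auto intro!: continuous_intros strict_mono_onI simp: power_strict_mono)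

theorem proposition4:
  fixes f :: "real ^ 'n \<Rightarrow> real ^ 'n"
    and Df :: "real ^ 'n \<Rightarrow> real ^ 'n ^ 'n"
    and B :: "real ^ 'm ^ 'n" and C :: "real ^ 'n ^ 'p" and D :: "real ^ 'm ^ 'p"
    and K :: "real ^ 'n ^ 'm" and L :: "real ^ 'p ^ 'n"
    and Q :: "real ^ 'n ^ 'n" and G :: "real ^ 'm ^ 'm" and \<beta> :: real
  assumes f_deriv: "\<And>x. (f has_derivative (\<lambda>h. Df x *v h)) (at x)"
    and Df_cont: "continuous_on UNIV Df"
    and beta_pos: "\<beta> > 0"
    and Q_nd: "neg_def Q"
    and LMI: "\<And>x. psd (block4
        (transpose (Df x - B ** K - L ** (C - D ** K)) ** Q
           + Q ** (Df x - B ** K - L ** (C - D ** K))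
           + transpose (C - D ** K) ** (C - D ** K))
        (Q ** (B - L ** D) ** G + transpose (C - D ** K) ** D ** G)
        (transpose (Q ** (B - L ** D) ** G + transpose (C - D ** K) ** D ** G))
        (transpose G ** transpose D ** D ** G - \<beta> *\<^sub>R mat 1))"
  shows "lower_incr_L2_gain f B C D K L G \<ge> ereal \<beta>"
proof -
  have lmi: "observer_lmi Df B C D K L Q G \<beta>"
    unfolding observer_lmi_def using LMI by blast
  have Q_sym: "transpose Q = Q"
    using Q_nd by (simp add: neg_def_def)
  have Q_nonpos: "v \<bullet> (Q *v v) \<le> 0" for v
    using Q_nd unfolding neg_def_def by (cases "v = 0") (auto intro: less_imp_le)
  obtain c where "c > 0" and Q_lower: "\<And>v. - (c * (norm v)\<^sup>2) \<le> v \<bullet> (Q *v v)"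
    using quadratic_form_lower_bound[of Q] by blast
  have "\<beta> \<in> lower_gain_set f B C D K L G"
    unfolding lower_gain_set_def
  proof (intro CollectI conjI exI[of _ "\<lambda>r. c * r\<^sup>2"] allI impI beta_pos classK_scaled_square \<open>c > 0\<close>)
    fix ya xi1 xi2 xh1 xh2 and \<tau> :: real
    assume "obs_traj f B C D K L G ya xi1 xh1" and "obs_traj f B C D K L G ya xi2 xh2" and "0 \<le> \<tau>"
    from obs_incremental_dissipation[OF f_deriv Q_sym lmi this]
    show "\<beta> * trunc_L2 (\<lambda>t. xi1 t - xi2 t) \<tau> - c * (norm (xh1 0 - xh2 0))\<^sup>2
        \<le> trunc_L2 (\<lambda>t. obs_out C D K G (xh1 t) (xi1 t) - obs_out C D K G (xh2 t) (xi2 t)) \<tau>"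
      using Q_nonpos[of "xh1 \<tau> - xh2 \<tau>"] Q_lower[of "xh1 0 - xh2 0"] by linarith
  qed
  then show ?thesis
    unfolding lower_incr_L2_gain_def by (rule Sup_upper[OF imageI])
qed

end
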